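(* Let $G$ be a graph and $M$ a bipartizing matching of $G$. Then: (i) for every diamond subgraph $D$ of $G$, both vertices of degree $3$ in $D$ are covered by $M$; (ii) for every $v\in V(G)$, the graph $G[N_G(v)]$ does not contain two vertex-disjoint paths on $3$ vertices (as subgraphs); (iii) $G$ does not contain the wheel $W_k$ as a subgraph for any $k\ge 4$; (iv) $G$ does not contain an odd $k$-pool as a subgraph for any odd $k\ge 3$.
   Context: A matching $M\subseteq E(G)$ is a bipartizing matching of $G$ if $(V(G),E(G)\setminus M)$ is bipartite. A diamond is $K_4$ minus one edge. For $k\ge 3$, the wheel $W_k$ is the graph obtained from a cycle $C_k$ by adding a vertex adjacent to all cycle vertices. For $k\ge 3$, a $k$-pool is the graph with vertices $p_1,\dots,p_k,b_1,\dots,b_k$ whose edges are the cycle $p_1p_2\cdots p_kp_1$ and, for each $i$ (indices mod $k$), the edges $b_ip_i$ and $b_ip_{i+1}$; it is odd if $k$ is odd. *)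

theory Defs
  imports Main
begin

definition graph :: "'a set \<Rightarrow> 'a set set \<Rightarrow> bool" where
  "graph V E \<longleftrightarrow> finite V \<and> (\<forall>e\<in>E. \<exists>u v. u \<noteq> v \<and> u \<in> V \<and> v \<in> V \<and> e = {u, v})"

definition matching :: "'a set set \<Rightarrow> 'a set set \<Rightarrow> bool" where
  "matching E M \<longleftrightarrow> M \<subseteq> E \<and> (\<forall>e\<in>M. \<forall>f\<in>M. e \<noteq> f \<longrightarrow> e \<inter> f = {})"

definition bipartite :: "'a set \<Rightarrow> 'a set set \<Rightarrow> bool" where
  "bipartite V E \<longleftrightarrow> (\<exists>A B. A \<inter> B = {} \<and> A \<union> B = V \<and>
      (\<forall>e\<in>E. \<exists>a b. a \<in> A \<and> b \<in> B \<and> e = {a, b}))"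

definition bipartizing_matching :: "'a set \<Rightarrow> 'a set set \<Rightarrow> 'a set set \<Rightarrow> bool" where
  "bipartizing_matching V E M \<longleftrightarrow> matching E M \<and> bipartite V (E - M)"

definition covered :: "'a set set \<Rightarrow> 'a \<Rightarrow> bool" where
  "covered M v \<longleftrightarrow> (\<exists>e\<in>M. v \<in> e)"

definition subgraph_embedding ::
  "('b \<Rightarrow> 'a) \<Rightarrow> 'b set \<Rightarrow> 'b set set \<Rightarrow> 'a set \<Rightarrow> 'a set set \<Rightarrow> bool" where
  "subgraph_embedding f VH EH V E \<longleftrightarrow> inj_on f VH \<and> f ` VH \<subseteq> V \<and> (\<forall>e\<in>EH. f ` e \<in> E)"

definition contains_subgraph :: "'b set \<Rightarrow> 'b set set \<Rightarrow> 'a set \<Rightarrow> 'a set set \<Rightarrow> bool" where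
  "contains_subgraph VH EH V E \<longleftrightarrow> (\<exists>f. subgraph_embedding f VH EH V E)"

definition neighborhood :: "'a set set \<Rightarrow> 'a \<Rightarrow> 'a set" where
  "neighborhood E v = {u. {u, v} \<in> E}"

definition induced_edges :: "'a set set \<Rightarrow> 'a set \<Rightarrow> 'a set set" where
  "induced_edges E S = {e \<in> E. e \<subseteq> S}"

text \<open>Diamond = K4 minus the edge {2,3}; vertices 0 and 1 have degree 3.\<close>
definition diamond_V :: "nat set" where "diamond_V = {0,1,2,3}"
definition diamond_E :: "nat set set" where
  "diamond_E = {{0,1},{0,2},{0,3},{1,2},{1,3}}"

definition two_P3_V :: "nat set" where "two_P3_V = {0..5}"
definition two_P3_E :: "nat set set" where
  "two_P3_E = {{0,1},{1,2},{3,4},{4,5}}"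

definition wheel_V :: "nat \<Rightarrow> nat set" where "wheel_V k = {0..k}"
definition wheel_E :: "nat \<Rightarrow> nat set set" where
  "wheel_E k = {{i, (i + 1) mod k} | i. i < k} \<union> {{k, i} | i. i < k}"

text \<open>k-pool: p_i = i (i < k), b_i = k + i; cycle p_0...p_{k-1}, and b_i adjacent to
  p_i and p_{i+1} (indices mod k).\<close>
definition pool_V :: "nat \<Rightarrow> nat set" where "pool_V k = {0..<2*k}"
definition pool_E :: "nat \<Rightarrow> nat set set" where
  "pool_E k = {{i, (i + 1) mod k} | i. i < k} \<union> {{k + i, i} | i. i < k}
              \<union> {{k + i, (i + 1) mod k} | i. i < k}"

end

theory Submission
  imports Defs
begin

text \<open>Since \<open>G - M\<close> is bipartite, every triangle of \<open>G\<close> has an edge in \<open>M\<close>, and since \<open>M\<close>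
  is a matching each vertex lies on at most one such edge. In a diamond the two triangles
  through the edge between the degree-3 vertices then force matched edges at both of them.
  A hub adjacent to a path \<open>x y z\<close> has a matched spoke to one of \<open>x, y, z\<close>; two disjoint such
  paths in a neighbourhood, or in a wheel with at least four rim vertices the three rim
  vertices following a matched spoke, give a second matched edge at the hub. In an odd
  \<open>k\<close>-pool the \<open>k\<close> triangles are edge-disjoint and each has a matched edge meeting the \<open>k\<close>
  rim vertices, so each meets the rim exactly once and no rim edge is matched; the rim is
  then an odd cycle of \<open>G - M\<close>. The small graphs are treated on their own vertex sets,
  since bipartizing matchings pull back along subgraph embeddings.\<close>

lemma bipartite_two_colouring:
  assumes "bipartite V F"
  obtains A where "\<And>x y. {x, y} \<in> F \<Longrightarrow> (x \<in> A) \<noteq> (y \<in> A)"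
proof -
  from assms obtain A B where AB: "A \<inter> B = {}" "\<forall>e\<in>F. \<exists>a b. a \<in> A \<and> b \<in> B \<and> e = {a, b}"
    unfolding bipartite_def by blast
  have "(x \<in> A) \<noteq> (y \<in> A)" if "{x, y} \<in> F" for x y
  proof -
    from AB(2) that have "\<exists>a b. a \<in> A \<and> b \<in> B \<and> {x, y} = {a, b}" by (rule bspec)
    then obtain a b where "a \<in> A" "b \<in> B" "{x, y} = {a, b}" by blast
    with AB(1) show ?thesis by (auto simp: doubleton_eq_iff)
  qed
  then show thesis by (rule that)
qed

lemma bipartite_no_triangle:
  assumes "bipartite V F" "{x, y} \<in> F" "{y, z} \<in> F" "{x, z} \<in> F"
  shows False
proof -
  obtain A where "\<And>x y. {x, y} \<in> F \<Longrightarrow> (x \<in> A) \<noteq> (y \<in> A)"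
    using bipartite_two_colouring[OF assms(1)] by blast
  from this[OF assms(2)] this[OF assms(3)] this[OF assms(4)] show False by blast
qed

lemma no_alternating_odd_cycle:
  fixes P :: "nat \<Rightarrow> bool"
  assumes "odd k" and alt: "\<And>i. i < k \<Longrightarrow> P i \<noteq> P (Suc i mod k)"
  shows False
proof -
  have "P i = (P 0 = even i)" if "i < k" for i
    using that
  proof (induction i)
    case (Suc i)
    then have "P (Suc i) \<noteq> P i" using alt[of i] by simp
    with Suc show ?case by simp
  qed simp
  moreover have "0 < k" "even (k - 1)"
    using \<open>odd k\<close> by (auto intro: Nat.gr0I)
  moreover have "Suc (k - 1) mod k = 0"
    using \<open>0 < k\<close> by simp
  ultimately show False
    using alt[of "k - 1"] by (metis diff_less zero_less_one)
qed

lemma mod_add_neq_self: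
  fixes j d k :: nat
  assumes "0 < d" "d < k"
  shows "(j + d) mod k \<noteq> j mod k"
proof
  assume "(j + d) mod k = j mod k"
  then have "k dvd d" by (simp add: mod_eq_dvd_iff_nat)
  with assms show False by (auto dest: dvd_imp_le)
qed

lemma matching_edge_unique:
  assumes "matching E M" "{x, y} \<in> M" "{x, z} \<in> M"
  shows "y = z"
  using assms unfolding matching_def by (metis disjoint_iff insertI1 doubleton_eq_iff)

lemma matching_edges_meet_set_once:
  assumes M: "matching E M" and "finite P" "finite I" "card P \<le> card I"
    and e: "inj_on e I" "e ` I \<subseteq> M" and meets: "\<forall>i\<in>I. e i \<inter> P \<noteq> {}" and "j \<in> I"
  shows "card (e j \<inter> P) = 1"
proof (rule ccontr)
  assume "card (e j \<inter> P) \<noteq> 1"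
  moreover have pos: "\<forall>i\<in>I. 1 \<le> card (e i \<inter> P)"
    using meets \<open>finite P\<close> by (simp add: Suc_le_eq card_gt_0_iff)
  ultimately have "(\<Sum>i\<in>I. 1) < (\<Sum>i\<in>I. card (e i \<inter> P))"
    using \<open>j \<in> I\<close> by (intro sum_strict_mono_ex1[OF \<open>finite I\<close> pos]) force
  also have "\<dots> = card (\<Union>i\<in>I. e i \<inter> P)"
  proof (rule card_UN_disjoint[symmetric])
    show "\<forall>i\<in>I. \<forall>i'\<in>I. i \<noteq> i' \<longrightarrow> e i \<inter> P \<inter> (e i' \<inter> P) = {}"
    proof (intro ballI impI)
      fix i i' assume "i \<in> I" "i' \<in> I" "i \<noteq> i'"
      then have "e i \<noteq> e i'" "e i \<in> M" "e i' \<in> M" using e by (auto dest: inj_onD)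
      then have "e i \<inter> e i' = {}" using M unfolding matching_def by blast
      then show "e i \<inter> P \<inter> (e i' \<inter> P) = {}" by blast
    qed
  qed (use \<open>finite I\<close> \<open>finite P\<close> in auto)
  also have "\<dots> \<le> card P"
    using \<open>finite P\<close> by (intro card_mono) auto
  finally show False using \<open>card P \<le> card I\<close> by simp
qed

lemma triangle_meets_bipartizing_matching:
  assumes "bipartizing_matching V E M" "{x, y} \<in> E" "{y, z} \<in> E" "{x, z} \<in> E"
  shows "{x, y} \<in> M \<or> {y, z} \<in> M \<or> {x, z} \<in> M"
  using assms bipartite_no_triangle[of V "E - M" x y z]
  unfolding bipartizing_matching_def by blast

lemma fan_meets_bipartizing_matching:
  assumes M: "bipartizing_matching V E M"
    and "{v, x} \<in> E" "{v, y} \<in> E" "{v, z} \<in> E" "{x, y} \<in> E" "{y, z} \<in> E" "x \<noteq> z"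
  shows "{v, x} \<in> M \<or> {v, y} \<in> M \<or> {v, z} \<in> M"
proof (rule ccontr)
  assume "\<not> ?thesis"
  with assms have "{y, x} \<in> M" "{y, z} \<in> M"
    using triangle_meets_bipartizing_matching[OF M, of v x y]
      triangle_meets_bipartizing_matching[OF M, of v y z]
    by (auto simp: insert_commute)
  with M \<open>x \<noteq> z\<close> show False
    unfolding bipartizing_matching_def by (metis matching_edge_unique)
qed

definition pullback_edges :: "('b \<Rightarrow> 'a) \<Rightarrow> 'b set set \<Rightarrow> 'a set set \<Rightarrow> 'b set set" where
  "pullback_edges f EH M = {e \<in> EH. f ` e \<in> M}"

lemma bipartizing_matching_pullback:
  assumes emb: "subgraph_embedding f VH EH V E" and edges: "\<forall>e\<in>EH. e \<subseteq> VH"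
    and M: "bipartizing_matching V E M"
  shows "bipartizing_matching VH EH (pullback_edges f EH M)"
proof -
  have inj: "inj_on f VH" and fE: "\<And>e. e \<in> EH \<Longrightarrow> f ` e \<in> E"
    using emb unfolding subgraph_embedding_def by auto
  have "matching EH (pullback_edges f EH M)"
    unfolding matching_def
  proof (intro conjI ballI impI)
    fix e e' assume e: "e \<in> pullback_edges f EH M" and e': "e' \<in> pullback_edges f EH M" and "e \<noteq> e'"
    moreover have "e \<subseteq> VH" "e' \<subseteq> VH"
      using e e' edges unfolding pullback_edges_def by auto
    ultimately have "f ` e \<noteq> f ` e'"
      using inj_on_image_eq_iff[OF inj] by blast
    with M e e' have "f ` e \<inter> f ` e' = {}"
      unfolding pullback_edges_def bipartizing_matching_def matching_def by blast
    then show "e \<inter> e' = {}" by blast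
  qed (auto simp: pullback_edges_def)
  moreover have "bipartite VH (EH - pullback_edges f EH M)"
  proof -
    obtain A B where AB: "A \<inter> B = {}" "\<forall>e\<in>E - M. \<exists>a b. a \<in> A \<and> b \<in> B \<and> e = {a, b}"
      using M unfolding bipartizing_matching_def bipartite_def by blast
    have "\<exists>x y. x \<in> VH \<inter> f -` A \<and> y \<in> VH - f -` A \<and> e = {x, y}"
      if e: "e \<in> EH - pullback_edges f EH M" for e
    proof -
      from e fE have "f ` e \<in> E - M" unfolding pullback_edges_def by auto
      with AB(2) have "\<exists>a b. a \<in> A \<and> b \<in> B \<and> f ` e = {a, b}" by (rule bspec)
      then obtain a b where ab: "a \<in> A" "b \<in> B" "f ` e = {a, b}" by blast
      moreover have "a \<in> f ` e" "b \<in> f ` e" using ab(3) by auto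
      ultimately obtain x y where xy: "x \<in> e" "y \<in> e" "f x = a" "f y = b"
        by blast
      have "e \<subseteq> VH" using e edges by blast
      then have "e = {x, y}"
        using xy ab(3) inj by (auto dest: inj_onD)
      with xy ab AB(1) \<open>e \<subseteq> VH\<close> show ?thesis by blast
    qed
    then show ?thesis unfolding bipartite_def
      by (intro exI[of _ "VH \<inter> f -` A"] exI[of _ "VH - f -` A"]) blast
  qed
  ultimately show ?thesis unfolding bipartizing_matching_def ..
qed

lemma contains_subgraph_bipartizing_matching:
  assumes "contains_subgraph VH EH V E" "\<forall>e\<in>EH. e \<subseteq> VH" "bipartizing_matching V E M"
  shows "\<exists>MH. bipartizing_matching VH EH MH"
  using assms bipartizing_matching_pullback unfolding contains_subgraph_def by blast

lemma neighbourhood_no_two_P3: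
  assumes M: "bipartizing_matching V E M"
  shows "\<not> contains_subgraph two_P3_V two_P3_E (neighborhood E v) (induced_edges E (neighborhood E v))"
proof
  assume "contains_subgraph two_P3_V two_P3_E (neighborhood E v) (induced_edges E (neighborhood E v))"
  then obtain g
    where emb: "subgraph_embedding g two_P3_V two_P3_E (neighborhood E v) (induced_edges E (neighborhood E v))"
    unfolding contains_subgraph_def by blast
  have spoke: "{v, g i} \<in> E" if "i \<le> 5" for i
  proof -
    have "g i \<in> neighborhood E v"
      using emb that unfolding subgraph_embedding_def two_P3_V_def by auto
    then show ?thesis unfolding neighborhood_def by (simp add: insert_commute)
  qed
  have path: "{g a, g b} \<in> E" if "{a, b} \<in> two_P3_E" for a b
    using emb that unfolding subgraph_embedding_def induced_edges_def by force
  have inj: "g a \<noteq> g b" if "a \<le> 5" "b \<le> 5" "a \<noteq> b" for a b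
    using emb that unfolding subgraph_embedding_def two_P3_V_def by (auto dest: inj_onD)
  have "{v, g 0} \<in> M \<or> {v, g 1} \<in> M \<or> {v, g 2} \<in> M"
    by (rule fan_meets_bipartizing_matching[OF M spoke spoke spoke path path inj])
      (simp_all add: two_P3_E_def)
  then obtain i where i: "i \<in> {0, 1, 2}" "{v, g i} \<in> M" by blast
  have "{v, g 3} \<in> M \<or> {v, g 4} \<in> M \<or> {v, g 5} \<in> M"
    by (rule fan_meets_bipartizing_matching[OF M spoke spoke spoke path path inj])
      (simp_all add: two_P3_E_def)
  then obtain j where j: "j \<in> {3, 4, 5}" "{v, g j} \<in> M" by blast
  have "g i = g j"
    using M i(2) j(2) matching_edge_unique unfolding bipartizing_matching_def by metis
  with inj[of i j] i(1) j(1) show False by auto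
qed

lemma diamond_bipartizing_matching_covers:
  assumes M: "bipartizing_matching diamond_V diamond_E M"
  shows "covered M 0 \<and> covered M 1"
proof -
  have "{0, 1} \<in> M \<or> {1, 2} \<in> M \<or> {0, 2} \<in> M" "{0, 1} \<in> M \<or> {1, 3} \<in> M \<or> {0, 3} \<in> M"
    by (rule triangle_meets_bipartizing_matching[OF M]; simp add: diamond_E_def insert_commute)+
  moreover have "\<not> ({0, 2} \<in> M \<and> {0, 3} \<in> M)" "\<not> ({1, 2} \<in> M \<and> {1, 3} \<in> M)"
    using M matching_edge_unique[of diamond_E M] unfolding bipartizing_matching_def by force+
  ultimately show ?thesis unfolding covered_def by blast
qed

lemma wheel_no_bipartizing_matching:
  assumes "4 \<le> k" and M: "bipartizing_matching (wheel_V k) (wheel_E k) M"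
  shows False
proof -
  have mat: "matching (wheel_E k) M" using M unfolding bipartizing_matching_def by simp
  have rim: "{i mod k, (i + 1) mod k} \<in> wheel_E k" for i
  proof -
    have "i mod k < k" using \<open>4 \<le> k\<close> by simp
    then have "{i mod k, (i mod k + 1) mod k} \<in> wheel_E k"
      unfolding wheel_E_def by blast
    then show ?thesis by (simp add: mod_Suc_eq)
  qed
  have spoke: "{k, i mod k} \<in> wheel_E k" for i
  proof -
    have "i mod k < k" using \<open>4 \<le> k\<close> by simp
    then show ?thesis unfolding wheel_E_def by blast
  qed
  have window: "\<exists>d\<in>{1, 2, 3}. {k, (j + d) mod k} \<in> M" for j
  proof -
    have "{(j + 1) mod k, (j + 2) mod k} \<in> wheel_E k" "{(j + 2) mod k, (j + 3) mod k} \<in> wheel_E k"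
      using rim[of "j + 1"] rim[of "j + 2"] by (simp_all add: eval_nat_numeral)
    moreover have "(j + 1) mod k \<noteq> (j + 3) mod k"
      using mod_add_neq_self[of 2 k "j + 1"] \<open>4 \<le> k\<close> by (simp add: eval_nat_numeral)
    ultimately have "{k, (j + 1) mod k} \<in> M \<or> {k, (j + 2) mod k} \<in> M \<or> {k, (j + 3) mod k} \<in> M"
      by (intro fan_meets_bipartizing_matching[OF M spoke spoke spoke])
    then show ?thesis by blast
  qed
  obtain d0 where "{k, d0 mod k} \<in> M" using window[of 0] by blast
  moreover obtain d where "d \<in> {1, 2, 3}" "{k, (d0 mod k + d) mod k} \<in> M"
    using window[of "d0 mod k"] by blast
  ultimately have "(d0 mod k + d) mod k = d0 mod k mod k"
    using matching_edge_unique[OF mat] by simp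
  moreover have "(d0 mod k + d) mod k \<noteq> d0 mod k mod k"
    using \<open>d \<in> {1, 2, 3}\<close> \<open>4 \<le> k\<close> by (intro mod_add_neq_self) auto
  ultimately show False by blast
qed

lemma odd_pool_no_bipartizing_matching:
  assumes "3 \<le> k" "odd k" and M: "bipartizing_matching (pool_V k) (pool_E k) M"
  shows False
proof -
  define s where "s i = (i + 1) mod k" for i
  define triangle where "triangle i = {{i, s i}, {k + i, i}, {k + i, s i}}" for i
  have mat: "matching (pool_E k) M" and bip: "bipartite (pool_V k) (pool_E k - M)"
    using M unfolding bipartizing_matching_def by simp_all
  have s: "s i < k" "s i \<noteq> i" "s (s i) \<noteq> i" if "i < k" for i
  proof -
    show "s i < k" using \<open>3 \<le> k\<close> unfolding s_def by simp
    show "s i \<noteq> i" "s (s i) \<noteq> i"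
      using mod_add_neq_self[of 1 k i] mod_add_neq_self[of 2 k i] \<open>3 \<le> k\<close> \<open>i < k\<close>
      unfolding s_def by (simp_all add: mod_Suc_eq eval_nat_numeral)
  qed
  have rim: "{i, s i} \<in> pool_E k" if "i < k" for i
    using that unfolding pool_E_def s_def by blast
  have triangle_matched: "\<exists>e. e \<in> triangle i \<inter> M" if "i < k" for i
  proof -
    have "{i, s i} \<in> pool_E k" "{s i, k + i} \<in> pool_E k" "{i, k + i} \<in> pool_E k"
      using that unfolding pool_E_def s_def by (blast, auto simp: insert_commute)
    from triangle_meets_bipartizing_matching[OF M this] show ?thesis
      unfolding triangle_def by (auto simp: insert_commute)
  qed
  have triangle_meets_rim: "e \<inter> {..<k} \<noteq> {}" if "e \<in> triangle i" "i < k" for e i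
    using that s(1)[of i] unfolding triangle_def by auto
  have triangles_disjoint: "triangle i \<inter> triangle i' = {}" if "i < k" "i' < k" "i \<noteq> i'" for i i'
    using that s[of i] s[of i'] unfolding triangle_def by (auto simp: doubleton_eq_iff)
  have rim_unmatched: "{i, s i} \<notin> M" if "i < k" for i
  proof
    assume "{i, s i} \<in> M"
    obtain c where c: "\<forall>i'\<in>{..<k}. c i' \<in> triangle i' \<inter> M"
      using bchoice[of "{..<k}" "\<lambda>i' e. e \<in> triangle i' \<inter> M"] triangle_matched by auto
    \<comment> \<open>Let the matched rim edge be the choice for its own triangle.\<close>
    define e where "e = c(i := {i, s i})"
    have e: "e i' \<in> triangle i' \<inter> M" if "i' < k" for i'
      using c that \<open>{i, s i} \<in> M\<close> unfolding e_def triangle_def by auto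
    have "inj_on e {..<k}"
    proof (rule inj_onI)
      fix i' i'' assume "i' \<in> {..<k}" "i'' \<in> {..<k}" "e i' = e i''"
      then show "i' = i''" using e[of i'] e[of i''] triangles_disjoint[of i' i''] by auto
    qed
    then have "card (e i \<inter> {..<k}) = 1"
      using e triangle_meets_rim \<open>i < k\<close>
      by (intro matching_edges_meet_set_once[OF mat]) auto
    moreover have "e i \<inter> {..<k} = {i, s i}"
      using s \<open>i < k\<close> unfolding e_def by auto
    ultimately show False using s(2)[OF \<open>i < k\<close>] by simp
  qed
  obtain A where A: "\<And>x y. {x, y} \<in> pool_E k - M \<Longrightarrow> (x \<in> A) \<noteq> (y \<in> A)"
    using bipartite_two_colouring[OF bip] by blast
  have "(i \<in> A) \<noteq> (Suc i mod k \<in> A)" if "i < k" for i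
    using A[of i "s i"] rim[OF that] rim_unmatched[OF that] unfolding s_def by simp
  with \<open>odd k\<close> show False by (rule no_alternating_odd_cycle)
qed

lemma diamond_edges_subset: "\<forall>e\<in>diamond_E. e \<subseteq> diamond_V"
  by (auto simp: diamond_V_def diamond_E_def)

lemma wheel_edges_subset: "\<forall>e\<in>wheel_E k. e \<subseteq> wheel_V k"
  by (auto simp: wheel_E_def wheel_V_def)

lemma pool_edges_subset: "\<forall>e\<in>pool_E k. e \<subseteq> pool_V k"
proof -
  have "i mod k < 2 * k" if "0 < k" for i
    using mod_less_divisor[OF that, of i] by linarith
  then show ?thesis by (auto simp: pool_E_def pool_V_def)
qed

theorem lemma1:
  fixes V :: "'a set" and E M :: "'a set set"
  assumes "graph V E"
    and "bipartizing_matching V E M"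
  shows "(\<forall>f. subgraph_embedding f diamond_V diamond_E V E \<longrightarrow> covered M (f 0) \<and> covered M (f 1))
       \<and> (\<forall>v\<in>V. \<not> contains_subgraph two_P3_V two_P3_E
                      (neighborhood E v) (induced_edges E (neighborhood E v)))
       \<and> (\<forall>k\<ge>4. \<not> contains_subgraph (wheel_V k) (wheel_E k) V E)
       \<and> (\<forall>k\<ge>3. odd k \<longrightarrow> \<not> contains_subgraph (pool_V k) (pool_E k) V E)"
proof -
  have "covered M (f 0) \<and> covered M (f 1)" if "subgraph_embedding f diamond_V diamond_E V E" for f
  proof -
    have "bipartizing_matching diamond_V diamond_E (pullback_edges f diamond_E M)"
      using that diamond_edges_subset assms(2) by (rule bipartizing_matching_pullback)
    from diamond_bipartizing_matching_covers[OF this] show ?thesis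
      unfolding covered_def pullback_edges_def by blast
  qed
  moreover have "\<not> contains_subgraph (wheel_V k) (wheel_E k) V E" if "4 \<le> k" for k
    using contains_subgraph_bipartizing_matching[OF _ wheel_edges_subset assms(2)]
      wheel_no_bipartizing_matching[OF that] by blast
  moreover have "\<not> contains_subgraph (pool_V k) (pool_E k) V E" if "3 \<le> k" "odd k" for k
    using contains_subgraph_bipartizing_matching[OF _ pool_edges_subset assms(2)]
      odd_pool_no_bipartizing_matching[OF that] by blast
  ultimately show ?thesis
    using neighbourhood_no_two_P3[OF assms(2)] by blast
qed

end
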